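(* Suppose $(A,W)$ is a $T_1$ Pratt comonoid which is generated by a countably infinite family $S$ of subsets of $A$ that satisfy no nontrivial distributive lattice relations (i.e., $S$ is a set of free generators of a free distributive lattice). Then $W$ has at least continuum cardinality, and in fact $W$ contains a complete sublattice isomorphic to the lattice of all subsets of $\omega$.
   Context: A Pratt comonoid is a pair $(A,W)$ where $A$ is a set and $W$ is a set of subsets of $A$ such that (i) $\emptyset\in W$ and $A\in W$; (ii) whenever $C\subseteq A\times A$ is such that for every $a\in A$ both the $a$-th row $\{b\mid (a,b)\in C\}$ and the $a$-th column $\{b\mid (b,a)\in C\}$ belong to $W$ (a crossword over $W$), the diagonal $\{b\mid (b,b)\in C\}$ also belongs to $W$. $(A,W)$ is $T_1$ if for all distinct $a,b\in A$ some member of $W$ contains $a$ but not $b$. $(A,W)$ is generated by a family $S$ of subsets of $A$ if $W$ is the least Pratt comonoid structure on $A$ containing $S$ (Pratt comonoid structures on $A$ are closed under arbitrary intersections). A complete sublattice of $W$ is a subset of $W$ closed under arbitrary (possibly infinite) unions and intersections taken in the power set of $A$, not necessarily containing $\emptyset$ or $A$. *)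

theory Defs
  imports Complex_Main "HOL-Library.Countable_Set"
begin

definition crossword :: "'a set \<Rightarrow> 'a set set \<Rightarrow> ('a \<times> 'a) set \<Rightarrow> bool" where
  "crossword A W C \<longleftrightarrow> C \<subseteq> A \<times> A \<and>
     (\<forall>a\<in>A. {b. (a, b) \<in> C} \<in> W \<and> {b. (b, a) \<in> C} \<in> W)"

definition pratt_comonoid :: "'a set \<Rightarrow> 'a set set \<Rightarrow> bool" where
  "pratt_comonoid A W \<longleftrightarrow> W \<subseteq> Pow A \<and> {} \<in> W \<and> A \<in> W \<and>
     (\<forall>C. crossword A W C \<longrightarrow> {b. (b, b) \<in> C} \<in> W)"

definition pratt_T1 :: "'a set \<Rightarrow> 'a set set \<Rightarrow> bool" where
  "pratt_T1 A W \<longleftrightarrow> (\<forall>a\<in>A. \<forall>b\<in>A. a \<noteq> b \<longrightarrow> (\<exists>U\<in>W. a \<in> U \<and> b \<notin> U))"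

definition pratt_generated_by :: "'a set \<Rightarrow> 'a set set \<Rightarrow> 'a set set \<Rightarrow> bool" where
  "pratt_generated_by A W S \<longleftrightarrow> S \<subseteq> Pow A \<and>
     W = \<Inter> {W'. pratt_comonoid A W' \<and> S \<subseteq> W'}"

datatype 'v lterm = LVar 'v | LMeet "'v lterm" "'v lterm" | LJoin "'v lterm" "'v lterm"

fun lt_vars :: "'v lterm \<Rightarrow> 'v set" where
  "lt_vars (LVar v) = {v}"
| "lt_vars (LMeet p q) = lt_vars p \<union> lt_vars q"
| "lt_vars (LJoin p q) = lt_vars p \<union> lt_vars q"

fun lt_eval :: "'a set lterm \<Rightarrow> 'a set" where
  "lt_eval (LVar X) = X"
| "lt_eval (LMeet p q) = lt_eval p \<inter> lt_eval q"
| "lt_eval (LJoin p q) = lt_eval p \<union> lt_eval q"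

text \<open>Equational derivability from the axioms of distributive lattices
  (the congruence whose quotient of the term algebra is the free distributive lattice).\<close>
inductive dl_eq :: "'v lterm \<Rightarrow> 'v lterm \<Rightarrow> bool" where
  refl: "dl_eq p p"
| sym: "dl_eq p q \<Longrightarrow> dl_eq q p"
| trans: "dl_eq p q \<Longrightarrow> dl_eq q r \<Longrightarrow> dl_eq p r"
| cong_meet: "dl_eq p p' \<Longrightarrow> dl_eq q q' \<Longrightarrow> dl_eq (LMeet p q) (LMeet p' q')"
| cong_join: "dl_eq p p' \<Longrightarrow> dl_eq q q' \<Longrightarrow> dl_eq (LJoin p q) (LJoin p' q')"
| meet_assoc: "dl_eq (LMeet (LMeet p q) r) (LMeet p (LMeet q r))"
| join_assoc: "dl_eq (LJoin (LJoin p q) r) (LJoin p (LJoin q r))"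
| meet_comm: "dl_eq (LMeet p q) (LMeet q p)"
| join_comm: "dl_eq (LJoin p q) (LJoin q p)"
| meet_absorb: "dl_eq (LMeet p (LJoin p q)) p"
| join_absorb: "dl_eq (LJoin p (LMeet p q)) p"
| distrib: "dl_eq (LMeet p (LJoin q r)) (LJoin (LMeet p q) (LMeet p r))"

text \<open>S satisfies no nontrivial distributive lattice relations: every lattice identity
  between terms in elements of S that holds in the power set is a distributive lattice law,
  i.e. S freely generates the sublattice it generates.\<close>
definition free_dl_generators :: "'a set set \<Rightarrow> bool" where
  "free_dl_generators S \<longleftrightarrow>
     (\<forall>p q. lt_vars p \<subseteq> S \<longrightarrow> lt_vars q \<subseteq> S \<longrightarrow> lt_eval p = lt_eval q \<longrightarrow> dl_eq p q)"

definition complete_sublattice :: "'a set set \<Rightarrow> 'a set set \<Rightarrow> bool" where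
  "complete_sublattice W L \<longleftrightarrow> L \<subseteq> W \<and>
     (\<forall>F. F \<subseteq> L \<and> F \<noteq> {} \<longrightarrow> \<Union>F \<in> L \<and> \<Inter>F \<in> L)"

end

theory Submission
  imports Defs
begin

text \<open>
  Since \<open>W\<close> is contained in the Pratt comonoid of up-sets of the specialisation preorder of
  \<open>S\<close>, the \<open>T\<^sub>1\<close> property is already witnessed by generators. Together with freeness this
  yields two disjoint sequences \<open>P\<close>, \<open>Q\<close> of generators with \<open>A \<inter> \<Inter>\<^sub>k P k = {}\<close>. Finite
  unions of the \<open>Q k\<close> and finite intersections of the \<open>P k\<close> lie in \<open>W\<close>; a single crossword
  then puts into \<open>W\<close>, for every \<open>X \<subseteq> \<nat>\<close>, the set of points that enter the union of
  the \<open>Q k\<close> before leaving the intersection of the \<open>P k\<close>, ties at levels in \<open>X\<close> included.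
  Freeness supplies a tie at every level, so this is an order embedding of the power set of
  \<open>\<nat>\<close> into \<open>W\<close> preserving nonempty unions and intersections; composing it with Dedekind
  cuts gives continuum many members of \<open>W\<close>.
\<close>

lemma crossword_diagonal:
  "pratt_comonoid A W \<Longrightarrow> crossword A W C \<Longrightarrow> {b. (b, b) \<in> C} \<in> W"
  unfolding pratt_comonoid_def by blast

lemma pratt_comonoid_Un:
  assumes pc: "pratt_comonoid A W" and U: "U \<in> W" and V: "V \<in> W"
  shows "U \<union> V \<in> W"
proof -
  have sub: "U \<subseteq> A" "V \<subseteq> A" and AW: "A \<in> W"
    using pc U V unfolding pratt_comonoid_def by auto
  let ?C = "(U \<times> A) \<union> (A \<times> V)"
  have "crossword A W ?C"
    unfolding crossword_def
  proof (intro conjI ballI)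
    fix a assume a: "a \<in> A"
    have "{b. (a, b) \<in> ?C} = (if a \<in> U then A else V)" using a sub by auto
    thus "{b. (a, b) \<in> ?C} \<in> W" using AW V by simp
    have "{b. (b, a) \<in> ?C} = (if a \<in> V then A else U)" using a sub by auto
    thus "{b. (b, a) \<in> ?C} \<in> W" using AW U by simp
  qed (use sub in auto)
  moreover have "{b. (b, b) \<in> ?C} = U \<union> V" using sub by auto
  ultimately show ?thesis using crossword_diagonal[OF pc] by metis
qed

lemma pratt_comonoid_Int:
  assumes pc: "pratt_comonoid A W" and U: "U \<in> W" and V: "V \<in> W"
  shows "U \<inter> V \<in> W"
proof -
  have sub: "U \<subseteq> A" "V \<subseteq> A" and EW: "{} \<in> W"
    using pc U V unfolding pratt_comonoid_def by auto
  have "crossword A W (U \<times> V)"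
    unfolding crossword_def
  proof (intro conjI ballI)
    fix a
    have "{b. (a, b) \<in> U \<times> V} = (if a \<in> U then V else {})" by auto
    thus "{b. (a, b) \<in> U \<times> V} \<in> W" using EW V by simp
    have "{b. (b, a) \<in> U \<times> V} = (if a \<in> V then U else {})" by auto
    thus "{b. (b, a) \<in> U \<times> V} \<in> W" using EW U by simp
  qed (use sub in auto)
  moreover have "{b. (b, b) \<in> U \<times> V} = U \<inter> V" by auto
  ultimately show ?thesis using crossword_diagonal[OF pc] by metis
qed

lemma pratt_comonoid_finite_Union:
  assumes pc: "pratt_comonoid A W"
  shows "finite F \<Longrightarrow> F \<subseteq> W \<Longrightarrow> \<Union>F \<in> W"
proof (induction F rule: finite_induct)
  case empty
  then show ?case using pc unfolding pratt_comonoid_def by simp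
next
  case (insert U F)
  then show ?case using pratt_comonoid_Un[OF pc] by simp
qed

lemma pratt_comonoid_finite_Inter:
  assumes pc: "pratt_comonoid A W"
  shows "finite F \<Longrightarrow> F \<subseteq> W \<Longrightarrow> A \<inter> \<Inter>F \<in> W"
proof (induction F rule: finite_induct)
  case empty
  then show ?case using pc unfolding pratt_comonoid_def by simp
next
  case (insert U F)
  then have "U \<inter> (A \<inter> \<Inter>F) \<in> W" using pratt_comonoid_Int[OF pc] by simp
  then show ?case by (simp add: Int_left_commute)
qed

text \<open>Rows of this crossword are up-sets for the rank \<open>v\<close>, columns are bounded down-sets for
  the rank \<open>u\<close>; its diagonal compares the two ranks of a point.\<close>

lemma pratt_comonoid_rank_comparison:
  fixes u v :: "'a \<Rightarrow> nat" and R :: "nat \<Rightarrow> nat \<Rightarrow> bool"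
  assumes pc: "pratt_comonoid A W" and DA: "D \<subseteq> A"
    and lower: "\<And>k. {x\<in>D. u x \<le> k} \<in> W" and upper: "\<And>k. {x\<in>A. k \<le> v x} \<in> W"
    and mono: "\<And>m m' n n'. m' \<le> m \<Longrightarrow> n \<le> n' \<Longrightarrow> R m n \<Longrightarrow> R m' n'"
    and bounded: "\<And>n. finite {m. R m n}"
  shows "{x\<in>D. R (u x) (v x)} \<in> W"
proof -
  have EW: "{} \<in> W" using pc unfolding pratt_comonoid_def by simp
  define C where "C = {(x, y). x \<in> D \<and> y \<in> A \<and> R (u x) (v y)}"
  have row: "{y. (x, y) \<in> C} \<in> W" for x
  proof (cases "x \<in> D \<and> (\<exists>n. R (u x) n)")
    case True
    define n0 where "n0 = (LEAST n. R (u x) n)"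
    have "R (u x) n0" unfolding n0_def using True by (blast intro: LeastI_ex)
    have "R (u x) n \<longleftrightarrow> n0 \<le> n" for n
      using mono[OF order_refl _ \<open>R (u x) n0\<close>, of n] Least_le[of "R (u x)" n]
      unfolding n0_def by blast
    then have "{y. (x, y) \<in> C} = {y\<in>A. n0 \<le> v y}"
      unfolding C_def using True by auto
    then show ?thesis using upper by simp
  next
    case False
    then have "{y. (x, y) \<in> C} = {}" unfolding C_def by auto
    then show ?thesis using EW by simp
  qed
  have col: "{x. (x, y) \<in> C} \<in> W" for y
  proof (cases "y \<in> A \<and> {m. R m (v y)} \<noteq> {}")
    case True
    define m0 where "m0 = Max {m. R m (v y)}"
    have "R m0 (v y)" unfolding m0_def using Max_in[OF bounded] True by blast
    have "R m (v y) \<longleftrightarrow> m \<le> m0" for m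
      using mono[OF _ order_refl \<open>R m0 (v y)\<close>, of m] Max_ge[OF bounded, of m "v y"]
      unfolding m0_def by blast
    then have "{x. (x, y) \<in> C} = {x\<in>D. u x \<le> m0}"
      unfolding C_def using True by auto
    then show ?thesis using lower by simp
  next
    case False
    then have "{x. (x, y) \<in> C} = {}" unfolding C_def by auto
    then show ?thesis using EW by simp
  qed
  have "C \<subseteq> A \<times> A" unfolding C_def using DA by auto
  then have "crossword A W C" unfolding crossword_def using row col by blast
  moreover have "{x. (x, x) \<in> C} = {x\<in>D. R (u x) (v x)}" unfolding C_def using DA by auto
  ultimately show ?thesis using crossword_diagonal[OF pc] by metis
qed

lemma pratt_generated_by_least:
  "pratt_generated_by A W S \<Longrightarrow> pratt_comonoid A W' \<Longrightarrow> S \<subseteq> W' \<Longrightarrow> W \<subseteq> W'"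
  unfolding pratt_generated_by_def by blast

lemma pratt_generated_by_generators: "pratt_generated_by A W S \<Longrightarrow> S \<subseteq> W"
  unfolding pratt_generated_by_def by blast

definition specialization_upsets :: "'a set \<Rightarrow> 'a set set \<Rightarrow> 'a set set" where
  "specialization_upsets A S =
     {U. U \<subseteq> A \<and> (\<forall>x\<in>U. \<forall>y\<in>A. (\<forall>s\<in>S. x \<in> s \<longrightarrow> y \<in> s) \<longrightarrow> y \<in> U)}"

lemma specialization_upsetsD:
  "U \<in> specialization_upsets A S \<Longrightarrow> x \<in> U \<Longrightarrow> y \<in> A \<Longrightarrow> (\<And>s. s \<in> S \<Longrightarrow> x \<in> s \<Longrightarrow> y \<in> s)
    \<Longrightarrow> y \<in> U"
  unfolding specialization_upsets_def by blast

lemma pratt_comonoid_specialization_upsets: "pratt_comonoid A (specialization_upsets A S)"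
  unfolding pratt_comonoid_def
proof (intro conjI allI impI)
  fix C assume "crossword A (specialization_upsets A S) C"
  then have CA: "C \<subseteq> A \<times> A"
    and rows: "\<And>a. a \<in> A \<Longrightarrow> {b. (a, b) \<in> C} \<in> specialization_upsets A S"
    and cols: "\<And>a. a \<in> A \<Longrightarrow> {b. (b, a) \<in> C} \<in> specialization_upsets A S"
    unfolding crossword_def by auto
  have "(y, y) \<in> C"
    if x: "(x, x) \<in> C" and y: "y \<in> A" and le: "\<And>s. s \<in> S \<Longrightarrow> x \<in> s \<Longrightarrow> y \<in> s" for x y
  proof -
    have "x \<in> A" using x CA by auto
    then have "(x, y) \<in> C" using specialization_upsetsD[OF rows, of x x y] x y le by simp
    then show ?thesis using specialization_upsetsD[OF cols[OF y], of x y] y le by simp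
  qed
  then show "{b. (b, b) \<in> C} \<in> specialization_upsets A S"
    unfolding specialization_upsets_def using CA by blast
qed (auto simp: specialization_upsets_def)

lemma pratt_generators_separate:
  assumes T1: "pratt_T1 A W" and gen: "pratt_generated_by A W S"
    and p: "p \<in> A" and q: "q \<in> A" and pq: "p \<noteq> q"
  shows "\<exists>s\<in>S. p \<in> s \<and> q \<notin> s"
proof (rule ccontr)
  assume "\<not> ?thesis"
  then have le: "\<And>s. s \<in> S \<Longrightarrow> p \<in> s \<Longrightarrow> q \<in> s" by blast
  have "S \<subseteq> specialization_upsets A S"
    using gen unfolding pratt_generated_by_def specialization_upsets_def by blast
  then have up: "W \<subseteq> specialization_upsets A S"
    by (rule pratt_generated_by_least[OF gen pratt_comonoid_specialization_upsets])
  obtain U where "U \<in> W" "p \<in> U" "q \<notin> U"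
    using T1 p q pq unfolding pratt_T1_def by blast
  then show False using specialization_upsetsD[of U A S p q] up q le by blast
qed

fun lt_Meet :: "'v \<Rightarrow> 'v list \<Rightarrow> 'v lterm" where
  "lt_Meet x [] = LVar x"
| "lt_Meet x (y # ys) = LMeet (LVar x) (lt_Meet y ys)"

fun lt_Join :: "'v \<Rightarrow> 'v list \<Rightarrow> 'v lterm" where
  "lt_Join x [] = LVar x"
| "lt_Join x (y # ys) = LJoin (LVar x) (lt_Join y ys)"

fun lt_eval_bool :: "('v \<Rightarrow> bool) \<Rightarrow> 'v lterm \<Rightarrow> bool" where
  "lt_eval_bool f (LVar v) = f v"
| "lt_eval_bool f (LMeet p q) = (lt_eval_bool f p \<and> lt_eval_bool f q)"
| "lt_eval_bool f (LJoin p q) = (lt_eval_bool f p \<or> lt_eval_bool f q)"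

lemma lt_Meet_simps:
  "lt_vars (lt_Meet x xs) = set (x # xs)"
  "lt_eval (lt_Meet x xs) = \<Inter>(set (x # xs))"
  "lt_eval_bool f (lt_Meet x xs) \<longleftrightarrow> (\<forall>y\<in>set (x # xs). f y)"
  by (induction x xs rule: lt_Meet.induct) auto

lemma lt_Join_simps:
  "lt_vars (lt_Join x xs) = set (x # xs)"
  "lt_eval (lt_Join x xs) = \<Union>(set (x # xs))"
  "lt_eval_bool f (lt_Join x xs) \<longleftrightarrow> (\<exists>y\<in>set (x # xs). f y)"
  by (induction x xs rule: lt_Join.induct) auto

lemma dl_eq_lt_eval_bool: "dl_eq p q \<Longrightarrow> lt_eval_bool f p = lt_eval_bool f q"
  by (induction rule: dl_eq.induct) auto

text \<open>Otherwise \<open>\<Sqinter>Ps = \<Sqinter>Ps \<sqinter> \<Squnion>Qs\<close> would be a relation among the generators; evaluating it in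
  the two-element lattice at the characteristic function of \<open>Ps\<close> shows that it is not a
  distributive lattice law.\<close>

lemma free_dl_generators_Inter_not_subset_Union:
  assumes free: "free_dl_generators S"
    and Ps: "finite Ps" "Ps \<noteq> {}" "Ps \<subseteq> S" and Qs: "finite Qs" "Qs \<noteq> {}" "Qs \<subseteq> S"
    and disj: "Ps \<inter> Qs = {}"
  shows "\<exists>x. x \<in> \<Inter>Ps \<and> x \<notin> \<Union>Qs"
proof (rule ccontr)
  assume "\<not> ?thesis"
  then have sub: "\<Inter>Ps \<subseteq> \<Union>Qs" by blast
  obtain x xs where xs: "set (x # xs) = Ps"
    using finite_list[OF Ps(1)] Ps(2) by (metis list.exhaust list.set(1))
  obtain y ys where ys: "set (y # ys) = Qs"
    using finite_list[OF Qs(1)] Qs(2) by (metis list.exhaust list.set(1))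
  let ?p = "LMeet (lt_Meet x xs) (lt_Join y ys)" and ?q = "lt_Meet x xs"
  have "lt_eval ?p = lt_eval ?q"
    using sub xs ys by (auto simp only: lt_eval.simps lt_Meet_simps lt_Join_simps)
  moreover have "lt_vars ?p = Ps \<union> Qs" "lt_vars ?q = Ps"
    using xs ys by (simp_all only: lt_vars.simps lt_Meet_simps lt_Join_simps)
  then have "lt_vars ?p \<subseteq> S" "lt_vars ?q \<subseteq> S"
    using Ps(3) Qs(3) by simp_all
  ultimately have "dl_eq ?p ?q"
    using free unfolding free_dl_generators_def by blast
  then have "lt_eval_bool (\<lambda>s. s \<in> Ps) ?p = lt_eval_bool (\<lambda>s. s \<in> Ps) ?q"
    by (rule dl_eq_lt_eval_bool)
  then show False
    using disj xs ys by (auto simp: lt_Meet_simps lt_Join_simps)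
qed

text \<open>Otherwise a generator \<open>t\<close> avoiding the finitely many generators that miss \<open>p\<close> or \<open>q\<close>
  contains, by freeness, a point outside all of them; by separation that point equals both
  \<open>p\<close> and \<open>q\<close>.\<close>

lemma exists_point_missed_infinitely_often:
  assumes sep: "\<And>p q. p \<in> A \<Longrightarrow> q \<in> A \<Longrightarrow> p \<noteq> q \<Longrightarrow> \<exists>s\<in>S. p \<in> s \<and> q \<notin> s"
    and free: "free_dl_generators S" and SA: "S \<subseteq> Pow A" and infS: "infinite S"
  shows "\<exists>p\<in>A. infinite {s\<in>S. p \<notin> s}"
proof (rule ccontr)
  assume "\<not> ?thesis"
  then have fin: "\<And>p. p \<in> A \<Longrightarrow> finite {s\<in>S. p \<notin> s}" by blast
  have "infinite A"
    using infS finite_subset[OF SA] by auto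
  then obtain p where p: "p \<in> A"
    by (metis finite.emptyI ex_in_conv)
  obtain q where q: "q \<in> A" and pq: "p \<noteq> q"
    using infinite_remove[OF \<open>infinite A\<close>, of p] by (metis finite.emptyI ex_in_conv Diff_iff singletonI)
  define Qs where "Qs = {s\<in>S. p \<notin> s} \<union> {s\<in>S. q \<notin> s}"
  have "finite Qs" unfolding Qs_def using fin p q by simp
  moreover have "Qs \<noteq> {}" unfolding Qs_def using sep[OF q p] pq by blast
  moreover obtain t where t: "t \<in> S - Qs"
    using Diff_infinite_finite[OF \<open>finite Qs\<close> infS] by (metis finite.emptyI ex_in_conv)
  ultimately obtain x where x: "x \<in> t" "x \<notin> \<Union>Qs"
    using free_dl_generators_Inter_not_subset_Union[OF free, of "{t}" Qs]
    unfolding Qs_def by auto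
  have "x \<in> A" using x(1) t SA by blast
  have "x = r" if r: "r \<in> A" "r = p \<or> r = q" for r
    using sep[OF \<open>x \<in> A\<close> r(1)] x(2) r(2) unfolding Qs_def by blast
  then show False using p q pq by metis
qed

text \<open>Enumerate the generators missing a point \<open>p\<^sub>0\<close>; the odd-indexed ones form \<open>Q\<close> and all
  other generators form \<open>P\<close>. Then \<open>P\<close> misses \<open>p\<^sub>0\<close> (through the generator with index 0)
  and every other point (through a generator containing \<open>p\<^sub>0\<close>, which is not in \<open>Q\<close>).\<close>

lemma exists_generator_sequences:
  assumes sep: "\<And>p q. p \<in> A \<Longrightarrow> q \<in> A \<Longrightarrow> p \<noteq> q \<Longrightarrow> \<exists>s\<in>S. p \<in> s \<and> q \<notin> s"
    and free: "free_dl_generators S" and SA: "S \<subseteq> Pow A"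
    and "countable S" and "infinite S"
  obtains P Q :: "nat \<Rightarrow> 'a set"
  where "inj P" "inj Q" "range P \<subseteq> S" "range Q \<subseteq> S" "range P \<inter> range Q = {}"
    "\<And>x. x \<in> A \<Longrightarrow> \<exists>k. x \<notin> P k"
proof -
  obtain p0 where p0: "p0 \<in> A" and infM: "infinite {s\<in>S. p0 \<notin> s}" (is "infinite ?M")
    using exists_point_missed_infinitely_often[OF sep free SA \<open>infinite S\<close>] by blast
  define c where "c = from_nat_into ?M"
  have "bij_betw c UNIV ?M"
    unfolding c_def using \<open>countable S\<close> infM by (simp add: bij_betw_from_nat_into)
  then have inj_c: "inj c" and cM: "\<And>k. c k \<in> ?M" by (auto simp: bij_betw_def)
  define Q where "Q k = c (2 * k + 1)" for k
  define T where "T = S - range Q"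
  have "c (2 * k) \<noteq> c (2 * j + 1)" for j k
    unfolding inj_eq[OF inj_c] by presburger
  then have cT: "c (2 * k) \<in> T" for k
    using cM unfolding T_def Q_def by auto
  have "inj (c \<circ> (\<lambda>k. 2 * k))"
    by (rule inj_compose[OF inj_c]) (simp add: inj_def)
  then have "infinite (range (c \<circ> (\<lambda>k. 2 * k)))"
    by (rule range_inj_infinite)
  moreover have "range (c \<circ> (\<lambda>k. 2 * k)) \<subseteq> T" using cT by auto
  ultimately have "infinite T" by (rule infinite_super[rotated])
  moreover have "countable T" unfolding T_def using \<open>countable S\<close> by simp
  ultimately have "bij_betw (from_nat_into T) UNIV T"
    by (simp add: bij_betw_from_nat_into)
  then have inj_P: "inj (from_nat_into T)" and range_P: "range (from_nat_into T) = T"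
    by (auto simp: bij_betw_def)
  have "inj (c \<circ> (\<lambda>k. 2 * k + 1))"
    by (rule inj_compose[OF inj_c]) (simp add: inj_def)
  then have inj_Q: "inj Q"
    unfolding Q_def by (simp add: o_def)
  have QM: "range Q \<subseteq> ?M" unfolding Q_def using cM by auto
  have "\<exists>s\<in>T. x \<notin> s" if x: "x \<in> A" for x
  proof (cases "x = p0")
    case True
    then show ?thesis using cT[of 0] cM[of 0] by auto
  next
    case False
    then obtain s where "s \<in> S" "p0 \<in> s" "x \<notin> s" using sep[OF p0 x] by blast
    then show ?thesis using QM unfolding T_def by blast
  qed
  then have "\<exists>k. x \<notin> from_nat_into T k" if "x \<in> A" for x
    using that range_P by (metis imageE)
  moreover have "range (from_nat_into T) \<subseteq> S" "range (from_nat_into T) \<inter> range Q = {}"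
    using range_P unfolding T_def by auto
  moreover have "range Q \<subseteq> S" using QM by auto
  ultimately show thesis using that[OF inj_P inj_Q] by blast
qed

definition first_hit :: "(nat \<Rightarrow> 'a set) \<Rightarrow> 'a \<Rightarrow> nat" where
  "first_hit Q x = (LEAST k. x \<in> Q k)"

definition first_miss :: "(nat \<Rightarrow> 'a set) \<Rightarrow> 'a \<Rightarrow> nat" where
  "first_miss P x = (LEAST k. x \<notin> P k)"

lemma first_hit_le_iff:
  assumes "x \<in> Q i"
  shows "first_hit Q x \<le> k \<longleftrightarrow> (\<exists>j\<le>k. x \<in> Q j)"
proof
  assume "first_hit Q x \<le> k"
  moreover have "x \<in> Q (first_hit Q x)"
    unfolding first_hit_def using assms by (rule LeastI)
  ultimately show "\<exists>j\<le>k. x \<in> Q j" by blast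
next
  assume "\<exists>j\<le>k. x \<in> Q j"
  then obtain j where "j \<le> k" "x \<in> Q j" by blast
  then show "first_hit Q x \<le> k"
    unfolding first_hit_def using Least_le[of "\<lambda>k. x \<in> Q k" j] by linarith
qed

lemma le_first_miss_iff:
  assumes "x \<notin> P i"
  shows "k \<le> first_miss P x \<longleftrightarrow> (\<forall>j<k. x \<in> P j)"
proof
  assume "k \<le> first_miss P x"
  then have "x \<in> P j" if "j < k" for j
    using that not_less_Least[of j "\<lambda>k. x \<notin> P k"] unfolding first_miss_def by simp
  then show "\<forall>j<k. x \<in> P j" by blast
next
  assume before: "\<forall>j<k. x \<in> P j"
  have "x \<notin> P (first_miss P x)"
    unfolding first_miss_def using assms by (rule LeastI)
  then show "k \<le> first_miss P x" using before leI by blast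
qed

lemma first_hit_eqI: "x \<in> Q n \<Longrightarrow> (\<And>j. j < n \<Longrightarrow> x \<notin> Q j) \<Longrightarrow> first_hit Q x = n"
  unfolding first_hit_def by (rule Least_equality) (use leI in blast)+

lemma first_miss_eqI: "x \<notin> P n \<Longrightarrow> (\<And>j. j < n \<Longrightarrow> x \<in> P j) \<Longrightarrow> first_miss P x = n"
  unfolding first_miss_def by (rule Least_equality) (use leI in blast)+

text \<open>A point lies in the cut when it enters \<open>\<Union>\<^sub>k Q k\<close> strictly before it leaves
  \<open>\<Inter>\<^sub>k P k\<close>; a tie at level \<open>n\<close> is admitted iff \<open>n \<in> X\<close>. Freeness provides a tie at every level.\<close>

definition staircase_cut :: "(nat \<Rightarrow> 'a set) \<Rightarrow> (nat \<Rightarrow> 'a set) \<Rightarrow> nat set \<Rightarrow> 'a set" where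
  "staircase_cut P Q X = {x \<in> \<Union>(range Q). first_hit Q x < first_miss P x
     \<or> (first_hit Q x = first_miss P x \<and> first_hit Q x \<in> X)}"

lemma staircase_cut_in_pratt_comonoid:
  fixes P Q :: "nat \<Rightarrow> 'a set"
  assumes pc: "pratt_comonoid A W" and PW: "range P \<subseteq> W" and QW: "range Q \<subseteq> W"
    and cover: "\<And>x. x \<in> A \<Longrightarrow> \<exists>k. x \<notin> P k"
  shows "staircase_cut P Q X \<in> W"
proof -
  have QA: "\<Union>(range Q) \<subseteq> A" using QW pc unfolding pratt_comonoid_def by blast
  have "{x \<in> \<Union>(range Q). first_hit Q x \<le> k} = \<Union>(Q ` {..k})" for k
  proof (intro set_eqI)
    fix x
    show "x \<in> {x \<in> \<Union>(range Q). first_hit Q x \<le> k} \<longleftrightarrow> x \<in> \<Union>(Q ` {..k})"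
    proof (cases "x \<in> \<Union>(range Q)")
      case True
      then obtain i where "x \<in> Q i" by blast
      then show ?thesis using first_hit_le_iff[of x Q i k] by auto
    qed auto
  qed
  moreover have "\<Union>(Q ` {..k}) \<in> W" for k
    using QW by (intro pratt_comonoid_finite_Union[OF pc]) auto
  ultimately have lower: "{x \<in> \<Union>(range Q). first_hit Q x \<le> k} \<in> W" for k
    by simp
  have "{x \<in> A. k \<le> first_miss P x} = A \<inter> \<Inter>(P ` {..<k})" for k
  proof (intro set_eqI)
    fix x
    show "x \<in> {x \<in> A. k \<le> first_miss P x} \<longleftrightarrow> x \<in> A \<inter> \<Inter>(P ` {..<k})"
    proof (cases "x \<in> A")
      case True
      then obtain i where "x \<notin> P i" using cover by blast
      then show ?thesis using le_first_miss_iff[of x P i k] True by auto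
    qed auto
  qed
  moreover have "A \<inter> \<Inter>(P ` {..<k}) \<in> W" for k
    using PW by (intro pratt_comonoid_finite_Inter[OF pc]) auto
  ultimately have upper: "{x \<in> A. k \<le> first_miss P x} \<in> W" for k
    by simp
  show ?thesis
    unfolding staircase_cut_def
  proof (rule pratt_comonoid_rank_comparison[OF pc QA lower upper])
    show "finite {m. m < n \<or> m = n \<and> m \<in> X}" for n
      by (rule finite_subset[of _ "{..n}"]) auto
  next
    fix m m' n n' :: nat
    assume "m' \<le> m" "n \<le> n'" "m < n \<or> m = n \<and> m \<in> X"
    then show "m' < n' \<or> m' = n' \<and> m' \<in> X" by (cases "m' = m \<and> n' = n") auto
  qed
qed

lemma staircase_cut_Union:
  "XX \<noteq> {} \<Longrightarrow> \<Union>(staircase_cut P Q ` XX) = staircase_cut P Q (\<Union>XX)"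
  unfolding staircase_cut_def by blast

lemma staircase_cut_Inter:
  "XX \<noteq> {} \<Longrightarrow> \<Inter>(staircase_cut P Q ` XX) = staircase_cut P Q (\<Inter>XX)"
  unfolding staircase_cut_def by blast

lemma exists_point_in_staircase:
  fixes P Q :: "nat \<Rightarrow> 'a set"
  assumes free: "free_dl_generators S" and "range P \<subseteq> S" "range Q \<subseteq> S"
    and "inj P" "inj Q" "range P \<inter> range Q = {}"
  shows "\<exists>x. x \<in> Q n \<and> (\<forall>j<n. x \<notin> Q j) \<and> (\<forall>i<n. x \<in> P i) \<and> x \<notin> P n"
proof -
  let ?Ps = "insert (Q n) (P ` {..<n})" and ?Qs = "insert (P n) (Q ` {..<n})"
  have PQ: "P i \<noteq> Q j" for i j using assms(6) by (metis disjoint_iff rangeI)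
  then have "?Ps \<inter> ?Qs = {}"
    using inj_eq[OF assms(4)] inj_eq[OF assms(5)] by auto
  moreover have "?Ps \<subseteq> S" "?Qs \<subseteq> S" using assms(2,3) by auto
  ultimately obtain x where "x \<in> \<Inter>?Ps" "x \<notin> \<Union>?Qs"
    using free_dl_generators_Inter_not_subset_Union[OF free, of ?Ps ?Qs] by auto
  then show ?thesis by auto
qed

lemma staircase_cut_subset_iff:
  fixes P Q :: "nat \<Rightarrow> 'a set"
  assumes "free_dl_generators S" "range P \<subseteq> S" "range Q \<subseteq> S"
    and "inj P" "inj Q" "range P \<inter> range Q = {}"
  shows "staircase_cut P Q X \<subseteq> staircase_cut P Q Y \<longleftrightarrow> X \<subseteq> Y"
proof
  assume sub: "staircase_cut P Q X \<subseteq> staircase_cut P Q Y"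
  show "X \<subseteq> Y"
  proof
    fix n assume "n \<in> X"
    obtain x where x: "x \<in> Q n" "\<forall>j<n. x \<notin> Q j" "\<forall>i<n. x \<in> P i" "x \<notin> P n"
      using exists_point_in_staircase[OF assms] by blast
    then have ranks: "first_hit Q x = n" "first_miss P x = n"
      by (auto intro: first_hit_eqI first_miss_eqI)
    then have "x \<in> staircase_cut P Q X"
      using x(1) \<open>n \<in> X\<close> unfolding staircase_cut_def by auto
    then have "x \<in> staircase_cut P Q Y" using sub by blast
    then show "n \<in> Y" using ranks unfolding staircase_cut_def by auto
  qed
qed (auto simp: staircase_cut_def)

lemma inj_staircase_cut:
  fixes P Q :: "nat \<Rightarrow> 'a set"
  assumes "free_dl_generators S" "range P \<subseteq> S" "range Q \<subseteq> S"
    and "inj P" "inj Q" "range P \<inter> range Q = {}"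
  shows "inj (staircase_cut P Q)"
proof (rule injI)
  fix X Y assume "staircase_cut P Q X = staircase_cut P Q Y"
  then show "X = Y" using staircase_cut_subset_iff[OF assms] by blast
qed

lemma complete_sublattice_range:
  assumes "range h \<subseteq> W"
    and "\<And>XX. XX \<noteq> {} \<Longrightarrow> \<Union>(h ` XX) = h (\<Union>XX)"
    and "\<And>XX. XX \<noteq> {} \<Longrightarrow> \<Inter>(h ` XX) = h (\<Inter>XX)"
  shows "complete_sublattice W (range h)"
  unfolding complete_sublattice_def
proof (intro conjI allI impI)
  fix F assume F: "F \<subseteq> range h \<and> F \<noteq> {}"
  then obtain XX where "F = h ` XX" "XX \<noteq> {}" by (metis image_empty subset_imageE)
  then show "\<Union>F \<in> range h" "\<Inter>F \<in> range h" using assms(2,3) by auto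
qed (use assms(1) in simp)

lemma inj_rat_cut: "inj (\<lambda>r::real. to_nat ` {q::rat. of_rat q < r})"
proof -
  have "\<not> a < b" if cuts: "{q::rat. of_rat q < a} = {q. of_rat q < b}" for a b :: real
  proof
    assume "a < b"
    then obtain q :: rat where "a < of_rat q" "of_rat q < b" using of_rat_dense by blast
    moreover have "of_rat q < a \<longleftrightarrow> of_rat q < b" using cuts by blast
    ultimately show False by linarith
  qed
  then have "inj (\<lambda>r::real. {q::rat. of_rat q < r})"
    by (intro injI) (metis linorder_neqE_linordered_idom)
  then show ?thesis by (auto simp: inj_def inj_image_eq_iff)
qed

theorem theorem7p10:
  fixes A :: "'a set" and W S :: "'a set set"
  assumes "pratt_comonoid A W"
    and "pratt_T1 A W"
    and "pratt_generated_by A W S"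
    and "countable S" and "infinite S"
    and "free_dl_generators S"
  shows "(\<exists>f :: real \<Rightarrow> 'a set. inj f \<and> range f \<subseteq> W)
       \<and> (\<exists>L. complete_sublattice W L \<and>
              (\<exists>h :: nat set \<Rightarrow> 'a set. bij_betw h UNIV L \<and> (\<forall>X Y. X \<subseteq> Y \<longleftrightarrow> h X \<subseteq> h Y)))"
proof -
  note pc = assms(1) and gen = assms(3) and free = assms(6)
  have SA: "S \<subseteq> Pow A" using gen unfolding pratt_generated_by_def by simp
  have SW: "S \<subseteq> W" using pratt_generated_by_generators[OF gen] .
  obtain P Q :: "nat \<Rightarrow> 'a set" where PQ: "inj P" "inj Q" "range P \<subseteq> S" "range Q \<subseteq> S"
    "range P \<inter> range Q = {}" and cover: "\<And>x. x \<in> A \<Longrightarrow> \<exists>k. x \<notin> P k"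
    using exists_generator_sequences[OF pratt_generators_separate[OF assms(2) gen] free SA assms(4,5)]
    by blast
  let ?h = "staircase_cut P Q"
  have hW: "range ?h \<subseteq> W"
    using staircase_cut_in_pratt_comonoid[OF pc _ _ cover] PQ(3,4) SW by blast
  have order: "X \<subseteq> Y \<longleftrightarrow> ?h X \<subseteq> ?h Y" for X Y
    using staircase_cut_subset_iff[OF free PQ(3,4,1,2,5)] by simp
  have "inj ?h" by (rule inj_staircase_cut[OF free PQ(3,4,1,2,5)])
  let ?f = "?h \<circ> (\<lambda>r::real. to_nat ` {q::rat. of_rat q < r})"
  show ?thesis
  proof (intro conjI)
    have "inj ?f" using \<open>inj ?h\<close> inj_rat_cut by (rule inj_compose)
    moreover have "range ?f \<subseteq> W" using hW by auto
    ultimately show "\<exists>f :: real \<Rightarrow> 'a set. inj f \<and> range f \<subseteq> W" by blast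
    have "complete_sublattice W (range ?h)"
      using hW staircase_cut_Union staircase_cut_Inter by (rule complete_sublattice_range)
    moreover have "bij_betw ?h UNIV (range ?h)" using \<open>inj ?h\<close> by (simp add: bij_betw_def)
    ultimately show "\<exists>L. complete_sublattice W L \<and>
        (\<exists>h :: nat set \<Rightarrow> 'a set. bij_betw h UNIV L \<and> (\<forall>X Y. X \<subseteq> Y \<longleftrightarrow> h X \<subseteq> h Y))"
      using order by blast
  qed
qed

end
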